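(* For every $n$, every $\sigma\in S_n$ and every pair $P,Q$ of standard Young tableaux of a common shape $\lambda\vdash n$, we have $\mathcal{P}(\sigma\rightarrow P,Q)=\mathcal{P}(\sigma^{-1}\rightarrow Q,P)$ and $\overline{\mathcal{P}}(\sigma\leftarrow P,Q)=\overline{\mathcal{P}}(\sigma^{-1}\leftarrow Q,P)$.
   Context: All quantities are rational functions of indeterminates $q,t$. Partitions are Young diagrams in French convention (cells $(x,y)\in\mathbb{Z}_{>0}^2$ with $x\le\lambda_y$), $\lambda'$ the conjugate; for $c=(x,y)\in\lambda$, $a_\lambda(c)=\lambda_y-x$, $\ell_\lambda(c)=\lambda'_x-y$; $n(\kappa)=\sum_{c\in\kappa}\ell_\kappa(c)$, $n'(\kappa)=\sum_{c\in\kappa}a_\kappa(c)$, $n(\rho/\kappa)=n(\rho)-n(\kappa)$, $n'(\rho/\kappa)=n'(\rho)-n'(\kappa)$. $\mathcal{U}(\lambda)$, $\mathcal{D}(\lambda)$: partitions obtained by adding, resp. removing, one cell; $\mathcal{D}^*(\lambda)=\mathcal{D}(\lambda)\cup\{\lambda\}$. For $\kappa\subseteq\rho$, $\mathcal{R}_{\rho/\kappa}$ (resp. $\mathcal{C}_{\rho/\kappa}$): cells of $\kappa$ in a row (resp. column) containing a cell of $\rho/\kappa$. $[i,j]=1-q^it^j$. For $\kappa$ obtained from $\rho$ by removing one cell: $\alpha_{\rho/\kappa}=\prod_{c\in\mathcal{R}_{\rho/\kappa}}\frac{[a_\kappa(c),\ell_\kappa(c)+1]}{[a_\rho(c),\ell_\rho(c)+1]}\prod_{c\in\mathcal{C}_{\rho/\kappa}}\frac{[a_\kappa(c)+1,\ell_\kappa(c)]}{[a_\rho(c)+1,\ell_\rho(c)]}$,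 $\overline{\alpha}_{\rho/\kappa}$ the same with the roles of "$+1$ on the first entry" and "$+1$ on the second entry" exchanged in both products, $\beta=1/\alpha$, $\overline{\beta}=1/\overline{\alpha}$. Local probabilities: $\mathcal{P}_\lambda(\lambda\rightarrow\nu)=t^{n(\nu/\lambda)}\alpha_{\nu/\lambda}$, $\overline{\mathcal{P}}_\lambda(\lambda\leftarrow\nu)=t^{n(\nu/\lambda)}\overline{\alpha}_{\nu/\lambda}$; for $\mu\in\mathcal{D}(\lambda)$, with $A=n'(\lambda/\mu)-n'(\nu/\lambda)$, $B=n(\nu/\lambda)-n(\lambda/\mu)$, $\gamma=\frac{(1-q^At^B)(1-q^{A+1}t^{B-1})}{(1-q)(1-t)}$: $\mathcal{P}_\lambda(\mu\rightarrow\nu)=t^{B-1}\alpha_{\nu/\lambda}\beta_{\lambda/\mu}/\gamma$, $\overline{\mathcal{P}}_\lambda(\mu\leftarrow\nu)=t^{B-1}\overline{\alpha}_{\nu/\lambda}\overline{\beta}_{\lambda/\mu}/\gamma$. Growths: for $\sigma\in S_n$, take the $n\times n$ grid with vertices $(i,j)$, $0\le i,j\le n$ (matrix coordinates); square $(i,j)$ has vertices NW $(i-1,j-1)$, NE $(i-1,j)$, SW $(i,j-1)$, SE $(i,j)$, and contains a 1 iff $i=\sigma(j)$. A growth associated with $\sigma$ is a labeling $\Lambda_{ij}$ of vertices by partitions with $\Lambda_{ij}\subseteq\Lambda_{i,j+1}$, $\Lambda_{ij}\subseteq\Lambda_{i+1,j}$ and $|\Lambda_{ij}|$ = number of squares $(i',j')$,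 $i'\le i$, $j'\le j$, containing a 1. $P(\Lambda)$ (resp. $Q(\Lambda)$) is the standard Young tableau with entry $i$ in the cell $\Lambda_{i,n}/\Lambda_{i-1,n}$ (resp. $\Lambda_{n,i}/\Lambda_{n,i-1}$). A square is of type III if its NE and SW vertices are both $\lambda$, NW vertex $\mu\in\mathcal{D}^*(\lambda)$, SE vertex $\nu\in\mathcal{U}(\lambda)$; then $\mathcal{P}(\square)=\mathcal{P}_\lambda(\mu\rightarrow\nu)$, $\overline{\mathcal{P}}(\square)=\overline{\mathcal{P}}_\lambda(\mu\leftarrow\nu)$; other squares have $\mathcal{P}(\square)=\overline{\mathcal{P}}(\square)=1$. $\mathcal{P}(\Lambda)=\prod_\square\mathcal{P}(\square)$, $\overline{\mathcal{P}}(\Lambda)=\prod_\square\overline{\mathcal{P}}(\square)$, and $\mathcal{P}(\sigma\rightarrow P,Q)=\sum\mathcal{P}(\Lambda)$, $\overline{\mathcal{P}}(\sigma\leftarrow P,Q)=\sum\overline{\mathcal{P}}(\Lambda)$, sums over growths $\Lambda$ associated with $\sigma$ with $P(\Lambda)=P$, $Q(\Lambda)=Q$. *)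

theory Defs
  imports Main "HOL-Combinatorics.Permutations" "HOL-Computational_Algebra.Polynomial"
    "HOL-Computational_Algebra.Fraction_Field"
begin

section \<open>Young diagrams (French convention), as finite sets of cells (x,y), x,y >= 1\<close>

type_synonym cell = "nat \<times> nat"
type_synonym diagram = "cell set"

definition is_partition :: "diagram \<Rightarrow> bool" where
  "is_partition D \<longleftrightarrow> finite D \<and> (\<forall>(x,y)\<in>D. x \<ge> 1 \<and> y \<ge> 1) \<and>
     (\<forall>x y x' y'. (x,y) \<in> D \<longrightarrow> 1 \<le> x' \<longrightarrow> x' \<le> x \<longrightarrow> 1 \<le> y' \<longrightarrow> y' \<le> y \<longrightarrow> (x',y') \<in> D)"

definition row_len :: "diagram \<Rightarrow> nat \<Rightarrow> nat" where
  "row_len D y = card {x. (x,y) \<in> D}"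
definition col_len :: "diagram \<Rightarrow> nat \<Rightarrow> nat" where
  "col_len D x = card {y. (x,y) \<in> D}"

definition arm :: "diagram \<Rightarrow> cell \<Rightarrow> nat" where
  "arm D c = row_len D (snd c) - fst c"
definition leg :: "diagram \<Rightarrow> cell \<Rightarrow> nat" where
  "leg D c = col_len D (fst c) - snd c"

definition nn :: "diagram \<Rightarrow> nat" where
  "nn D = (\<Sum>c\<in>D. leg D c)"
definition nn' :: "diagram \<Rightarrow> nat" where
  "nn' D = (\<Sum>c\<in>D. arm D c)"

definition nskew :: "diagram \<Rightarrow> diagram \<Rightarrow> int" where
  "nskew \<rho> \<kappa> = int (nn \<rho>) - int (nn \<kappa>)"
definition nskew' :: "diagram \<Rightarrow> diagram \<Rightarrow> int" where
  "nskew' \<rho> \<kappa> = int (nn' \<rho>) - int (nn' \<kappa>)"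

definition Ups :: "diagram \<Rightarrow> diagram set" where
  "Ups lam = {\<nu>. is_partition \<nu> \<and> lam \<subseteq> \<nu> \<and> card (\<nu> - lam) = 1}"
definition Dns :: "diagram \<Rightarrow> diagram set" where
  "Dns lam = {\<mu>. is_partition \<mu> \<and> \<mu> \<subseteq> lam \<and> card (lam - \<mu>) = 1}"
definition Dns_star :: "diagram \<Rightarrow> diagram set" where
  "Dns_star lam = Dns lam \<union> {lam}"

definition Rset :: "diagram \<Rightarrow> diagram \<Rightarrow> cell set" where
  "Rset \<rho> \<kappa> = {(x,y)\<in>\<kappa>. \<exists>x'. (x',y) \<in> \<rho> - \<kappa>}"
definition Cset :: "diagram \<Rightarrow> diagram \<Rightarrow> cell set" where
  "Cset \<rho> \<kappa> = {(x,y)\<in>\<kappa>. \<exists>y'. (x,y') \<in> \<rho> - \<kappa>}"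

definition br :: "'a::field \<Rightarrow> 'a \<Rightarrow> nat \<Rightarrow> nat \<Rightarrow> 'a" where
  "br q t i j = 1 - q ^ i * t ^ j"

definition alpha :: "'a::field \<Rightarrow> 'a \<Rightarrow> diagram \<Rightarrow> diagram \<Rightarrow> 'a" where
  "alpha q t \<rho> \<kappa> =
     (\<Prod>c\<in>Rset \<rho> \<kappa>. br q t (arm \<kappa> c) (leg \<kappa> c + 1) / br q t (arm \<rho> c) (leg \<rho> c + 1)) *
     (\<Prod>c\<in>Cset \<rho> \<kappa>. br q t (arm \<kappa> c + 1) (leg \<kappa> c) / br q t (arm \<rho> c + 1) (leg \<rho> c))"

definition alpha_bar :: "'a::field \<Rightarrow> 'a \<Rightarrow> diagram \<Rightarrow> diagram \<Rightarrow> 'a" where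
  "alpha_bar q t \<rho> \<kappa> =
     (\<Prod>c\<in>Rset \<rho> \<kappa>. br q t (arm \<kappa> c + 1) (leg \<kappa> c) / br q t (arm \<rho> c + 1) (leg \<rho> c)) *
     (\<Prod>c\<in>Cset \<rho> \<kappa>. br q t (arm \<kappa> c) (leg \<kappa> c + 1) / br q t (arm \<rho> c) (leg \<rho> c + 1))"

definition beta :: "'a::field \<Rightarrow> 'a \<Rightarrow> diagram \<Rightarrow> diagram \<Rightarrow> 'a" where
  "beta q t \<rho> \<kappa> = 1 / alpha q t \<rho> \<kappa>"
definition beta_bar :: "'a::field \<Rightarrow> 'a \<Rightarrow> diagram \<Rightarrow> diagram \<Rightarrow> 'a" where
  "beta_bar q t \<rho> \<kappa> = 1 / alpha_bar q t \<rho> \<kappa>"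

definition gamma :: "'a::field \<Rightarrow> 'a \<Rightarrow> int \<Rightarrow> int \<Rightarrow> 'a" where
  "gamma q t A B = (1 - q powi A * t powi B) * (1 - q powi (A + 1) * t powi (B - 1)) / ((1 - q) * (1 - t))"

text \<open>Local probabilities P_lambda(mu -> nu) and Pbar_lambda(mu <- nu),
  for mu in D*(lambda), nu in U(lambda).\<close>
definition localP :: "'a::field \<Rightarrow> 'a \<Rightarrow> diagram \<Rightarrow> diagram \<Rightarrow> diagram \<Rightarrow> 'a" where
  "localP q t lam \<mu> \<nu> =
    (if \<mu> = lam then t powi (nskew \<nu> lam) * alpha q t \<nu> lam
     else (let A = nskew' lam \<mu> - nskew' \<nu> lam; B = nskew \<nu> lam - nskew lam \<mu> in
           t powi (B - 1) * alpha q t \<nu> lam * beta q t lam \<mu> / gamma q t A B))"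

definition localPbar :: "'a::field \<Rightarrow> 'a \<Rightarrow> diagram \<Rightarrow> diagram \<Rightarrow> diagram \<Rightarrow> 'a" where
  "localPbar q t lam \<mu> \<nu> =
    (if \<mu> = lam then t powi (nskew \<nu> lam) * alpha_bar q t \<nu> lam
     else (let A = nskew' lam \<mu> - nskew' \<nu> lam; B = nskew \<nu> lam - nskew lam \<mu> in
           t powi (B - 1) * alpha_bar q t \<nu> lam * beta_bar q t lam \<mu> / gamma q t A B))"

text \<open>A labeling of the vertices (i,j), 0 <= i,j <= n, of the grid by partitions is represented
  by a function, normalised to the empty diagram outside the grid.  Square (i,j) (1 <= i,j <= n)
  contains a 1 iff i = sigma j.\<close>

definition growth :: "(nat \<Rightarrow> nat) \<Rightarrow> nat \<Rightarrow> (nat \<Rightarrow> nat \<Rightarrow> diagram) \<Rightarrow> bool" where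
  "growth \<sigma> n \<Lambda> \<longleftrightarrow>
     (\<forall>i j. (i > n \<or> j > n) \<longrightarrow> \<Lambda> i j = {}) \<and>
     (\<forall>i\<le>n. \<forall>j\<le>n. is_partition (\<Lambda> i j)) \<and>
     (\<forall>i\<le>n. \<forall>j<n. \<Lambda> i j \<subseteq> \<Lambda> i (j+1)) \<and>
     (\<forall>i<n. \<forall>j\<le>n. \<Lambda> i j \<subseteq> \<Lambda> (i+1) j) \<and>
     (\<forall>i\<le>n. \<forall>j\<le>n. card (\<Lambda> i j) =
          card {(i',j'). 1 \<le> i' \<and> i' \<le> i \<and> 1 \<le> j' \<and> j' \<le> j \<and> i' = \<sigma> j'})"

definition syt :: "(cell \<Rightarrow> nat) \<Rightarrow> diagram \<Rightarrow> nat \<Rightarrow> bool" where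
  "syt T lam n \<longleftrightarrow> is_partition lam \<and> card lam = n \<and> bij_betw T lam {1..n} \<and>
     (\<forall>c. c \<notin> lam \<longrightarrow> T c = 0) \<and>
     (\<forall>x y. (x+1,y) \<in> lam \<longrightarrow> T (x,y) < T (x+1,y)) \<and>
     (\<forall>x y. (x,y+1) \<in> lam \<longrightarrow> T (x,y) < T (x,y+1))"

definition P_tab :: "nat \<Rightarrow> (nat \<Rightarrow> nat \<Rightarrow> diagram) \<Rightarrow> cell \<Rightarrow> nat" where
  "P_tab n \<Lambda> c =
     (if \<exists>i. 1 \<le> i \<and> i \<le> n \<and> c \<in> \<Lambda> i n - \<Lambda> (i-1) n
      then THE i. 1 \<le> i \<and> i \<le> n \<and> c \<in> \<Lambda> i n - \<Lambda> (i-1) n else 0)"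
definition Q_tab :: "nat \<Rightarrow> (nat \<Rightarrow> nat \<Rightarrow> diagram) \<Rightarrow> cell \<Rightarrow> nat" where
  "Q_tab n \<Lambda> c =
     (if \<exists>i. 1 \<le> i \<and> i \<le> n \<and> c \<in> \<Lambda> n i - \<Lambda> n (i-1)
      then THE i. 1 \<le> i \<and> i \<le> n \<and> c \<in> \<Lambda> n i - \<Lambda> n (i-1) else 0)"

text \<open>Weight of square (i,j): NW = Lambda(i-1)(j-1), NE = Lambda(i-1)j, SW = Lambda i (j-1), SE = Lambda i j.\<close>
definition typeIII :: "diagram \<Rightarrow> diagram \<Rightarrow> diagram \<Rightarrow> diagram \<Rightarrow> bool" where
  "typeIII NW NE SW SE \<longleftrightarrow> NE = SW \<and> NW \<in> Dns_star NE \<and> SE \<in> Ups NE"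

definition sqP :: "'a::field \<Rightarrow> 'a \<Rightarrow> (nat \<Rightarrow> nat \<Rightarrow> diagram) \<Rightarrow> nat \<Rightarrow> nat \<Rightarrow> 'a" where
  "sqP q t \<Lambda> i j =
     (if typeIII (\<Lambda> (i-1) (j-1)) (\<Lambda> (i-1) j) (\<Lambda> i (j-1)) (\<Lambda> i j)
      then localP q t (\<Lambda> (i-1) j) (\<Lambda> (i-1) (j-1)) (\<Lambda> i j) else 1)"
definition sqPbar :: "'a::field \<Rightarrow> 'a \<Rightarrow> (nat \<Rightarrow> nat \<Rightarrow> diagram) \<Rightarrow> nat \<Rightarrow> nat \<Rightarrow> 'a" where
  "sqPbar q t \<Lambda> i j =
     (if typeIII (\<Lambda> (i-1) (j-1)) (\<Lambda> (i-1) j) (\<Lambda> i (j-1)) (\<Lambda> i j)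
      then localPbar q t (\<Lambda> (i-1) j) (\<Lambda> (i-1) (j-1)) (\<Lambda> i j) else 1)"

definition growthP :: "'a::field \<Rightarrow> 'a \<Rightarrow> nat \<Rightarrow> (nat \<Rightarrow> nat \<Rightarrow> diagram) \<Rightarrow> 'a" where
  "growthP q t n \<Lambda> = (\<Prod>i\<in>{1..n}. \<Prod>j\<in>{1..n}. sqP q t \<Lambda> i j)"
definition growthPbar :: "'a::field \<Rightarrow> 'a \<Rightarrow> nat \<Rightarrow> (nat \<Rightarrow> nat \<Rightarrow> diagram) \<Rightarrow> 'a" where
  "growthPbar q t n \<Lambda> = (\<Prod>i\<in>{1..n}. \<Prod>j\<in>{1..n}. sqPbar q t \<Lambda> i j)"

definition probP :: "'a::field \<Rightarrow> 'a \<Rightarrow> nat \<Rightarrow> (nat \<Rightarrow> nat) \<Rightarrow> (cell \<Rightarrow> nat) \<Rightarrow> (cell \<Rightarrow> nat) \<Rightarrow> 'a" where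
  "probP q t n \<sigma> P Q =
     (\<Sum>\<Lambda>\<in>{\<Lambda>. growth \<sigma> n \<Lambda> \<and> P_tab n \<Lambda> = P \<and> Q_tab n \<Lambda> = Q}. growthP q t n \<Lambda>)"
definition probPbar :: "'a::field \<Rightarrow> 'a \<Rightarrow> nat \<Rightarrow> (nat \<Rightarrow> nat) \<Rightarrow> (cell \<Rightarrow> nat) \<Rightarrow> (cell \<Rightarrow> nat) \<Rightarrow> 'a" where
  "probPbar q t n \<sigma> P Q =
     (\<Sum>\<Lambda>\<in>{\<Lambda>. growth \<sigma> n \<Lambda> \<and> P_tab n \<Lambda> = P \<and> Q_tab n \<Lambda> = Q}. growthPbar q t n \<Lambda>)"

section \<open>The field Q(q,t) of rational functions, realised as Q(q)(t)\<close>

type_synonym qtfun = "(rat poly fract) poly fract"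

definition qvar :: qtfun where
  "qvar = Fract [: Fract [:0, 1:] 1 :] 1"
definition tvar :: qtfun where
  "tvar = Fract [:0, 1:] 1"

end

theory Submission
  imports Defs
begin

text \<open>Reflecting a growth of \<open>\<sigma>\<close> in the main diagonal gives a growth of \<open>\<sigma>\<^sup>-\<^sup>1\<close> in which the
  roles of \<open>P\<close> and \<open>Q\<close> are exchanged. A square of type III has equal NE and SW vertices, so
  reflection keeps it of type III with the same local weight; every other square has weight 1.
  Hence reflection is a weight-preserving bijection between the growths being summed.\<close>

definition transpose_grid :: "(nat \<Rightarrow> nat \<Rightarrow> 'a) \<Rightarrow> nat \<Rightarrow> nat \<Rightarrow> 'a" where
  "transpose_grid L i j = L j i"

lemma transpose_grid_transpose_grid [simp]: "transpose_grid (transpose_grid L) = L"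
  by (simp add: transpose_grid_def fun_eq_iff)

lemma card_graph_inv_box:
  assumes "bij \<sigma>"
  shows "card {(i', j'). 1 \<le> i' \<and> i' \<le> i \<and> 1 \<le> j' \<and> j' \<le> j \<and> i' = inv \<sigma> j'} =
         card {(i', j'). 1 \<le> i' \<and> i' \<le> j \<and> 1 \<le> j' \<and> j' \<le> i \<and> i' = \<sigma> j'}"
proof -
  have "{(i', j'). 1 \<le> i' \<and> i' \<le> i \<and> 1 \<le> j' \<and> j' \<le> j \<and> i' = inv \<sigma> j'} =
        prod.swap ` {(i', j'). 1 \<le> i' \<and> i' \<le> j \<and> 1 \<le> j' \<and> j' \<le> i \<and> i' = \<sigma> j'}"
    using assms by (force simp: bij_inv_eq_iff image_iff)
  then show ?thesis
    by (simp add: card_image)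
qed

lemma growth_transpose_grid:
  assumes "bij \<sigma>" and "growth \<sigma> n L"
  shows "growth (inv \<sigma>) n (transpose_grid L)"
  using assms(2) card_graph_inv_box[OF assms(1)]
  unfolding growth_def transpose_grid_def by simp

lemma growth_transpose_grid_iff:
  assumes "bij \<sigma>"
  shows "growth (inv \<sigma>) n (transpose_grid L) \<longleftrightarrow> growth \<sigma> n L"
  using growth_transpose_grid[OF assms] growth_transpose_grid[OF bij_imp_bij_inv[OF assms]]
  by (metis assms inv_inv_eq transpose_grid_transpose_grid)

lemma P_tab_transpose_grid: "P_tab n (transpose_grid L) = Q_tab n L"
  unfolding P_tab_def Q_tab_def transpose_grid_def ..

lemma Q_tab_transpose_grid: "Q_tab n (transpose_grid L) = P_tab n L"
  unfolding P_tab_def Q_tab_def transpose_grid_def ..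

lemma sqP_transpose_grid: "sqP q t (transpose_grid L) j i = sqP q t L i j"
  unfolding sqP_def typeIII_def transpose_grid_def by auto

lemma sqPbar_transpose_grid: "sqPbar q t (transpose_grid L) j i = sqPbar q t L i j"
  unfolding sqPbar_def typeIII_def transpose_grid_def by auto

lemma growthP_transpose_grid: "growthP q t n (transpose_grid L) = growthP q t n L"
  unfolding growthP_def by (subst prod.swap) (simp only: sqP_transpose_grid)

lemma growthPbar_transpose_grid: "growthPbar q t n (transpose_grid L) = growthPbar q t n L"
  unfolding growthPbar_def by (subst prod.swap) (simp only: sqPbar_transpose_grid)

lemma bij_betw_transpose_grid_growths:
  assumes "bij \<sigma>"
  shows "bij_betw transpose_grid {\<Lambda>. growth \<sigma> n \<Lambda> \<and> P_tab n \<Lambda> = P \<and> Q_tab n \<Lambda> = Q}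
                                 {\<Lambda>. growth (inv \<sigma>) n \<Lambda> \<and> P_tab n \<Lambda> = Q \<and> Q_tab n \<Lambda> = P}"
proof (rule bij_betwI[where g = transpose_grid])
  have "growth (inv \<sigma>) n L \<longleftrightarrow> growth \<sigma> n (transpose_grid L)" for L
    using growth_transpose_grid_iff[OF assms, of n "transpose_grid L"] by simp
  then show "transpose_grid \<in> {\<Lambda>. growth (inv \<sigma>) n \<Lambda> \<and> P_tab n \<Lambda> = Q \<and> Q_tab n \<Lambda> = P} \<rightarrow>
                              {\<Lambda>. growth \<sigma> n \<Lambda> \<and> P_tab n \<Lambda> = P \<and> Q_tab n \<Lambda> = Q}"
    by (simp add: P_tab_transpose_grid Q_tab_transpose_grid)
qed (auto simp: growth_transpose_grid_iff[OF assms] P_tab_transpose_grid Q_tab_transpose_grid)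

lemma probP_inv:
  assumes "bij \<sigma>"
  shows "probP q t n \<sigma> P Q = probP q t n (inv \<sigma>) Q P"
  unfolding probP_def
  using sum.reindex_bij_betw[OF bij_betw_transpose_grid_growths[OF assms], of "growthP q t n"]
  by (simp add: growthP_transpose_grid)

lemma probPbar_inv:
  assumes "bij \<sigma>"
  shows "probPbar q t n \<sigma> P Q = probPbar q t n (inv \<sigma>) Q P"
  unfolding probPbar_def
  using sum.reindex_bij_betw[OF bij_betw_transpose_grid_growths[OF assms], of "growthPbar q t n"]
  by (simp add: growthPbar_transpose_grid)

theorem theorem4p26:
  fixes n :: nat and \<sigma> :: "nat \<Rightarrow> nat" and lam :: diagram and P Q :: "cell \<Rightarrow> nat"
  assumes "\<sigma> permutes {1..n}"
    and "is_partition lam" and "card lam = n"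
    and "syt P lam n" and "syt Q lam n"
  shows "probP qvar tvar n \<sigma> P Q = probP qvar tvar n (inv \<sigma>) Q P \<and>
         probPbar qvar tvar n \<sigma> P Q = probPbar qvar tvar n (inv \<sigma>) Q P"
  using permutes_bij[OF assms(1)] by (simp add: probP_inv probPbar_inv)

end
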